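(* Assume that for every $A\in\mathcal B(E)$, $m(A)>0$ implies $R1_A(x)>0$ for $m$-a.e. $x$. Let $\nu\in\mathcal M(E)$ with $\nu\ll m$, and let $A\in\mathcal B(E)$ with $m(A)>0$. Then there exist $t_0>0$ and $B\in\mathcal B(E)$ with $\nu(B)>0$ such that $\inf_{x\in B}p_{t_0}(x,A)>0$.
   Context: $(E,\mathcal B(E),m)$ is a $\sigma$-finite measure space; $\mathcal M(E)$ the probability measures on it. $p_t(x,\cdot)$, $t\ge0$, is a transition probability function (probability measures, jointly measurable in $(t,x)$, $p_0(x,A)=1_A(x)$); $p_tf(x)=\int f\,dp_t(x,\cdot)$; $Rf(x)=\int_0^\infty e^{-t}p_tf(x)\,dt$. *)

theory Defs
  imports "HOL-Probability.Probability"
begin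

definition transition_prob :: "'a measure \<Rightarrow> (real \<Rightarrow> 'a \<Rightarrow> 'a measure) \<Rightarrow> bool" where
  "transition_prob M p \<longleftrightarrow>
     (\<forall>t\<ge>0. \<forall>x\<in>space M. prob_space (p t x) \<and> sets (p t x) = sets M) \<and>
     (\<forall>A\<in>sets M. (\<lambda>(t,x). measure (p t x) A)
         \<in> borel_measurable (restrict_space borel {0..} \<Otimes>\<^sub>M M)) \<and>
     (\<forall>x\<in>space M. \<forall>A\<in>sets M. measure (p 0 x) A = indicator A x)"

definition resolvent_ind :: "(real \<Rightarrow> 'a \<Rightarrow> 'a measure) \<Rightarrow> 'a set \<Rightarrow> 'a \<Rightarrow> real" where
  "resolvent_ind p A x = (LINT t:{0..}|lborel. exp (- t) * measure (p t x) A)"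

end

theory Submission
  imports Defs
begin

text \<open>If no set of positive \<open>\<nu>\<close>-measure carried a uniform lower bound for \<open>p\<^sub>t(\<cdot>,A)\<close>, then
  \<open>p\<^sub>t(\<cdot>,A) = 0\<close> \<open>\<nu>\<close>-a.e. for every \<open>t > 0\<close>. By Fubini on \<open>[0,\<infinity>) \<times> E\<close> this makes
  \<open>R1\<^sub>A = 0\<close> \<open>\<nu>\<close>-a.e., whereas the hypothesis together with \<open>\<nu> \<ll> m\<close> gives \<open>R1\<^sub>A > 0\<close> \<open>\<nu>\<close>-a.e.\<close>

lemma exists_INF_pos_if_not_AE_eq_0:
  fixes f :: "'a \<Rightarrow> real"
  assumes f: "f \<in> borel_measurable N" and nonneg: "\<And>x. x \<in> space N \<Longrightarrow> 0 \<le> f x"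
    and not_AE: "\<not> (AE x in N. f x = 0)"
  shows "\<exists>B\<in>sets N. emeasure N B > 0 \<and> (INF x\<in>B. f x) > 0"
proof (rule ccontr)
  assume no_bound: "\<not> ?thesis"
  define B where "B n = {x\<in>space N. f x > 1 / (real n + 1)}" for n :: nat
  have B_sets: "B n \<in> sets N" for n
    unfolding B_def using f by measurable
  have "B n \<in> null_sets N" for n
  proof (rule ccontr)
    assume "B n \<notin> null_sets N"
    then have pos: "emeasure N (B n) > 0"
      using B_sets by (simp add: null_sets_def zero_less_iff_neq_zero)
    then have "B n \<noteq> {}" by auto
    then have "(INF x\<in>B n. f x) \<ge> 1 / (real n + 1)"
      by (intro cINF_greatest) (auto simp: B_def)
    then have "(INF x\<in>B n. f x) > 0"
      by (smt (verit) divide_pos_pos of_nat_0_le_iff)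
    with no_bound B_sets pos show False by blast
  qed
  then have "AE x in N. \<forall>n. x \<notin> B n"
    by (simp add: AE_all_countable AE_not_in)
  then have "AE x in N. f x = 0"
  proof (rule AE_mp[OF _ AE_I2], safe)
    fix x assume x: "x \<in> space N" and not_in_B: "\<forall>n. x \<notin> B n"
    show "f x = 0"
    proof (rule ccontr)
      assume "f x \<noteq> 0"
      with nonneg[OF x] have "f x > 0" by linarith
      then obtain n where "inverse (real (Suc n)) < f x"
        using reals_Archimedean by blast
      then have "x \<in> B n"
        using x by (simp add: B_def field_simps)
      with not_in_B show False by blast
    qed
  qed
  with not_AE show False by contradiction
qed

lemma transition_prob_measurable:
  assumes "transition_prob M p" "A \<in> sets M"
  shows "(\<lambda>(t, x). measure (p t x) A) \<in> borel_measurable (restrict_space borel {0..} \<Otimes>\<^sub>M M)"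
  using assms unfolding transition_prob_def by blast

lemma transition_prob_measurable_section:
  assumes "transition_prob M p" "A \<in> sets M" "t \<ge> 0"
  shows "(\<lambda>x. measure (p t x) A) \<in> borel_measurable M"
proof -
  have "Pair t \<in> measurable M (restrict_space borel {0..} \<Otimes>\<^sub>M M)"
    using assms(3) by (intro measurable_Pair1') simp
  from measurable_compose[OF this transition_prob_measurable[OF assms(1,2)]] show ?thesis
    by simp
qed

lemma transition_prob_measurable_lborel:
  assumes "transition_prob M p" "A \<in> sets M" "sets N = sets M"
  shows "(\<lambda>(t, x). measure (p t x) A) \<in> borel_measurable (restrict_space lborel {0..} \<Otimes>\<^sub>M N)"
proof -
  have "sets (restrict_space lborel {0..}) = sets (restrict_space (borel :: real measure) {0..})"
    by (intro sets_restrict_space_cong) simp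
  then show ?thesis
    using transition_prob_measurable[OF assms(1,2)]
    by (subst measurable_cong_sets[OF sets_pair_measure_cong[OF _ assms(3)] refl])
qed

lemma AE_resolvent_ind_eq_0:
  assumes p: "transition_prob M p" and A: "A \<in> sets M"
    and N: "sigma_finite_measure N" "sets N = sets M"
    and vanish: "\<And>t. t > 0 \<Longrightarrow> AE x in N. measure (p t x) A = 0"
  shows "AE x in N. resolvent_ind p A x = 0"
proof -
  define L where "L = restrict_space (lborel :: real measure) {0..}"
  interpret L: sigma_finite_measure L
    unfolding L_def by (intro sigma_finite_measure_restrict_space) (auto simp: lborel.sigma_finite_measure_axioms)
  interpret pair_sigma_finite L N
    using N(1) L.sigma_finite_measure_axioms by (simp add: pair_sigma_finite_def)
  have fst_measurable: "fst \<in> borel_measurable (L \<Otimes>\<^sub>M N)"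
    unfolding L_def by (intro measurable_compose[OF measurable_fst] measurable_restrict_space1) simp
  have "Measurable.pred (L \<Otimes>\<^sub>M N) (\<lambda>z. fst z > 0 \<longrightarrow> (\<lambda>(t, x). measure (p t x) A) z = 0)"
    using transition_prob_measurable_lborel[OF p A N(2)] fst_measurable unfolding L_def
    by measurable
  then have pred_sets: "{z\<in>space (L \<Otimes>\<^sub>M N). fst z > 0 \<longrightarrow> measure (p (fst z) (snd z)) A = 0}
      \<in> sets (L \<Otimes>\<^sub>M N)"
    by (simp add: pred_def case_prod_beta)
  have "AE t in L. AE x in N. t > 0 \<longrightarrow> measure (p t x) A = 0"
    using vanish by simp
  then have "AE x in N. AE t in L. t > 0 \<longrightarrow> measure (p t x) A = 0"
    using AE_commute[OF pred_sets] by simp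
  then show ?thesis
  proof eventually_elim
    case (elim x)
    then have "AE t in lborel. t \<in> {0..} \<longrightarrow> t > 0 \<longrightarrow> measure (p t x) A = 0"
      unfolding L_def by (subst (asm) AE_restrict_space_iff) auto
    \<comment> \<open>the value at \<open>t = 0\<close>, where \<open>p\<^sub>0(x,A) = 1\<^sub>A(x)\<close>, is a Lebesgue null set\<close>
    then have "AE t in lborel. indicator {0..} t *\<^sub>R (exp (- t) * measure (p t x) A) = 0"
      using AE_lborel_singleton[of "0::real"]
      by eventually_elim (auto simp: indicator_def)
    then show "resolvent_ind p A x = 0"
      unfolding resolvent_ind_def set_lebesgue_integral_def by (rule integral_eq_zero_AE)
  qed
qed

theorem lemma4p1:
  fixes M :: "'a measure" and p :: "real \<Rightarrow> 'a \<Rightarrow> 'a measure"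
    and nu :: "'a measure" and A :: "'a set"
  assumes "sigma_finite_measure M"
    and "transition_prob M p"
    and "\<forall>C\<in>sets M. emeasure M C > 0 \<longrightarrow> (AE x in M. resolvent_ind p C x > 0)"
    and "prob_space nu" and "sets nu = sets M" and "absolutely_continuous M nu"
    and "A \<in> sets M" and "emeasure M A > 0"
  shows "\<exists>t0>0. \<exists>B\<in>sets M. measure nu B > 0 \<and> (INF x\<in>B. measure (p t0 x) A) > 0"
proof -
  interpret nu: prob_space nu by fact
  have R_pos: "AE x in nu. resolvent_ind p A x > 0"
    using absolutely_continuous_AE[OF assms(5,6)] assms(3,7,8) by blast
  have "\<exists>t0>0. \<not> (AE x in nu. measure (p t0 x) A = 0)"
  proof (rule ccontr)
    assume "\<not> ?thesis"
    then have "AE x in nu. measure (p t x) A = 0" if "t > 0" for t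
      using that by blast
    then have "AE x in nu. resolvent_ind p A x = 0"
      by (rule AE_resolvent_ind_eq_0[OF assms(2,7) nu.sigma_finite_measure_axioms assms(5)])
    with R_pos have "AE x in nu. False" by eventually_elim simp
    then show False using nu.AE_False by simp
  qed
  then obtain t0 where "t0 > 0" and not_AE: "\<not> (AE x in nu. measure (p t0 x) A = 0)"
    by blast
  have "(\<lambda>x. measure (p t0 x) A) \<in> borel_measurable nu"
    unfolding measurable_cong_sets[OF assms(5) refl]
    using transition_prob_measurable_section[OF assms(2,7)] \<open>t0 > 0\<close> by simp
  from exists_INF_pos_if_not_AE_eq_0[OF this measure_nonneg not_AE]
  obtain B where B: "B \<in> sets nu" "emeasure nu B > 0" "(INF x\<in>B. measure (p t0 x) A) > 0"
    by blast
  have "measure nu B > 0"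
    using B(2) nu.emeasure_eq_measure[of B] by simp
  with B(1,3) \<open>t0 > 0\<close> assms(5) show ?thesis
    by blast
qed

end
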